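(* Let $G=(V,E)$ be an $(n-4)$-regular graph on $n>4$ nodes. Let $\emptyset\ne V'\subseteq V$ with $|V'|=tn$, and let $\alpha n$ be the number of nodes of a largest clique in the induced subgraph $G[V']$. Then $$\mathsf M(V')\le\frac{4t^2+2\alpha-3t}{n-4}.$$
   Context: For a finite simple undirected graph $G=(V,E)$ with $m=|E|\ge1$ edges, degrees $d_v$, and $a_{u,v}=1$ if $\{u,v\}\in E$ and $0$ otherwise: for $C\subseteq V$, $\mathsf M(C)=\frac{1}{2m}\sum_{u\in C}\sum_{v\in C}\big(a_{u,v}-\frac{d_ud_v}{2m}\big)$, the sum over all ordered pairs including $u=v$. *)

theory Defs
  imports Complex_Main
begin

definition simple_graph :: "'a set \<Rightarrow> ('a \<Rightarrow> 'a \<Rightarrow> bool) \<Rightarrow> bool" where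
  "simple_graph V E \<longleftrightarrow> finite V \<and> (\<forall>u v. E u v \<longrightarrow> E v u)
     \<and> (\<forall>u. \<not> E u u) \<and> (\<forall>u v. E u v \<longrightarrow> u \<in> V \<and> v \<in> V)"

definition degree :: "'a set \<Rightarrow> ('a \<Rightarrow> 'a \<Rightarrow> bool) \<Rightarrow> 'a \<Rightarrow> nat" where
  "degree V E v = card {u \<in> V. E v u}"

definition edges :: "'a set \<Rightarrow> ('a \<Rightarrow> 'a \<Rightarrow> bool) \<Rightarrow> 'a set set" where
  "edges V E = {{u, v} | u v. u \<in> V \<and> v \<in> V \<and> E u v}"

definition num_edges :: "'a set \<Rightarrow> ('a \<Rightarrow> 'a \<Rightarrow> bool) \<Rightarrow> nat" where
  "num_edges V E = card (edges V E)"

definition adj :: "('a \<Rightarrow> 'a \<Rightarrow> bool) \<Rightarrow> 'a \<Rightarrow> 'a \<Rightarrow> real" where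
  "adj E u v = (if E u v then 1 else 0)"

definition modularity :: "'a set \<Rightarrow> ('a \<Rightarrow> 'a \<Rightarrow> bool) \<Rightarrow> 'a set \<Rightarrow> real" where
  "modularity V E C = (let m = real (num_edges V E) in
     (1 / (2 * m)) * (\<Sum>u\<in>C. \<Sum>v\<in>C.
        adj E u v - real (degree V E u) * real (degree V E v) / (2 * m)))"

definition regular :: "'a set \<Rightarrow> ('a \<Rightarrow> 'a \<Rightarrow> bool) \<Rightarrow> nat \<Rightarrow> bool" where
  "regular V E k \<longleftrightarrow> (\<forall>v\<in>V. degree V E v = k)"

definition is_clique_in :: "('a \<Rightarrow> 'a \<Rightarrow> bool) \<Rightarrow> 'a set \<Rightarrow> 'a set \<Rightarrow> bool" where
  "is_clique_in E W K \<longleftrightarrow> K \<subseteq> W \<and> (\<forall>u\<in>K. \<forall>v\<in>K. u \<noteq> v \<longrightarrow> E u v)"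

definition clique_number :: "('a \<Rightarrow> 'a \<Rightarrow> bool) \<Rightarrow> 'a set \<Rightarrow> nat" where
  "clique_number E W = Max {card K | K. is_clique_in E W K}"

end

theory Submission
  imports Defs
begin

(* Write S(C) for the number of ordered adjacent pairs inside C.
   (1) Counting ordered pairs of C: S(C) + #(ordered non-adjacent pairs of distinct
       vertices of C) + |C| = |C|^2.
   (2) A greedy argument builds a clique K of G[C] with 2|C| <= 2|K| + #(non-adjacent
       pairs), so with omega the clique number, S(C) <= |C|^2 - 3|C| + 2 omega.
   (3) By the handshake lemma a k-regular graph on n vertices has 2m = nk, hence
       the modularity of C is (S(C) - k|C|^2/n) / (nk).
   With k = n - 4, |C| = tn and omega = alpha n, combining (2) and (3) and dividing
   by n(n-4) gives the bound. *)

lemma handshake: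
  assumes G: "simple_graph V E"
  shows "2 * num_edges V E = (\<Sum>u\<in>V. degree V E u)"
proof -
  have fin: "finite V" and sym: "\<And>u v. E u v \<Longrightarrow> E v u" and irr: "\<And>u. \<not> E u u"
    using G unfolding simple_graph_def by auto
  have "edges V E \<subseteq> Pow V" unfolding edges_def by auto
  then have finE: "finite (edges V E)" using fin by (meson finite_Pow_iff finite_subset)
  have two_ends: "\<forall>e\<in>edges V E. card {u\<in>V. u \<in> e} = 2"
  proof
    fix e assume "e \<in> edges V E"
    then obtain u v where e: "e = {u,v}" "u \<in> V" "v \<in> V" "E u v" unfolding edges_def by auto
    have "u \<noteq> v" using e(4) irr by auto
    moreover have "{w\<in>V. w \<in> e} = {u,v}" using e by auto
    ultimately show "card {u\<in>V. u \<in> e} = 2" by simp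
  qed
  have incident: "card {e\<in>edges V E. u \<in> e} = degree V E u" if "u \<in> V" for u
  proof -
    have "bij_betw (\<lambda>v. {u,v}) {v\<in>V. E u v} {e\<in>edges V E. u \<in> e}"
    proof (rule bij_betwI')
      show "\<And>x y. ({u, x} = {u, y}) = (x = y)" by (metis doubleton_eq_iff)
      show "\<And>x. x \<in> {v \<in> V. E u v} \<Longrightarrow> {u, x} \<in> {e \<in> edges V E. u \<in> e}"
        using that unfolding edges_def by auto
      show "\<And>y. y \<in> {e \<in> edges V E. u \<in> e} \<Longrightarrow> \<exists>x\<in>{v \<in> V. E u v}. y = {u, x}"
        unfolding edges_def using sym by auto
    qed
    then show ?thesis unfolding degree_def by (metis bij_betw_same_card)
  qed
  have "(\<Sum>u\<in>V. card {e\<in>edges V E. u \<in> e}) = 2 * card (edges V E)"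
    using sum_multicount[OF fin finE two_ends] by simp
  then show ?thesis using incident unfolding num_edges_def by simp
qed

lemma regular_num_edges:
  assumes "simple_graph V E" and "regular V E k"
  shows "2 * num_edges V E = card V * k"
  using handshake[OF assms(1)] assms(2) unfolding regular_def by simp

definition adj_pairs :: "('a \<Rightarrow> 'a \<Rightarrow> bool) \<Rightarrow> 'a set \<Rightarrow> real" where
  "adj_pairs E C = (\<Sum>u\<in>C. \<Sum>v\<in>C. adj E u v)"

text \<open>In a k-regular graph on n vertices all null-model terms equal k/n, so
  M(C) = (S(C) - k |C|^2 / n) / (n k); when nk = 0 there are no edges and both
  sides vanish by the convention x / 0 = 0.\<close>
lemma modularity_regular:
  assumes G: "simple_graph V E" and reg: "regular V E k" and "C \<subseteq> V"
  shows "modularity V E C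
           = (adj_pairs E C - real k * real (card C) ^ 2 / real (card V)) / (real (card V) * real k)"
proof -
  let ?n = "real (card V)"
  have m: "2 * real (num_edges V E) = ?n * real k"
    using regular_num_edges[OF G reg] by (metis of_nat_mult of_nat_numeral)
  show ?thesis
  proof (cases "?n * real k = 0")
    case True
    then have "real (num_edges V E) = 0" using m by linarith
    then show ?thesis using True by (simp add: modularity_def)
  next
    case False
    have deg: "real (degree V E u) = real k" if "u \<in> C" for u
      using reg that \<open>C \<subseteq> V\<close> unfolding regular_def by auto
    have "modularity V E C
            = (1 / (?n * k)) * (\<Sum>u\<in>C. \<Sum>v\<in>C. adj E u v - real k * real k / (?n * k))"
      unfolding modularity_def Let_def m
      by (intro arg_cong2[where f="(*)"] sum.cong refl) (simp add: deg)
    also have "\<dots> = (1 / (?n * k)) * (adj_pairs E C - real (card C) ^ 2 * (real k * real k / (?n * k)))"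
      unfolding adj_pairs_def by (simp add: sum_subtractf power2_eq_square)
    also have "\<dots> = (adj_pairs E C - real k * real (card C) ^ 2 / ?n) / (?n * k)"
      using False by (simp add: field_simps)
    finally show ?thesis .
  qed
qed

definition nonadj_pairs :: "('a \<Rightarrow> 'a \<Rightarrow> bool) \<Rightarrow> 'a set \<Rightarrow> ('a \<times> 'a) set" where
  "nonadj_pairs E C = {p \<in> C \<times> C. fst p \<noteq> snd p \<and> \<not> E (fst p) (snd p)}"

text \<open>Every ordered pair of C is adjacent, non-adjacent, or diagonal.\<close>
lemma pair_count:
  assumes "finite C" and irr: "\<And>u. \<not> E u u"
  shows "adj_pairs E C + real (card (nonadj_pairs E C)) + real (card C) = real (card C) ^ 2"
proof -
  define N where "N u = {v\<in>C. v \<noteq> u \<and> \<not> E u v}" for u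
  have card_nonadj: "card (nonadj_pairs E C) = (\<Sum>u\<in>C. card (N u))"
  proof -
    have "nonadj_pairs E C = Sigma C N" unfolding nonadj_pairs_def N_def by auto
    then show ?thesis using assms(1) by (simp add: N_def)
  qed
  have row: "(\<Sum>v\<in>C. adj E u v) + real (card (N u)) + 1 = real (card C)" if "u \<in> C" for u
  proof -
    have row_adj: "(\<Sum>v\<in>C. adj E u v) = real (card {v\<in>C. E u v})"
      unfolding adj_def using assms(1) by (simp add: sum.If_cases Int_def)
    have split: "C = ({v\<in>C. E u v} \<union> N u) \<union> {u}" using that irr unfolding N_def by auto
    have "card ({v\<in>C. E u v} \<union> N u) = card {v\<in>C. E u v} + card (N u)"
      using assms(1) by (intro card_Un_disjoint) (auto simp: N_def)
    moreover have "u \<notin> {v\<in>C. E u v} \<union> N u" using irr by (auto simp: N_def)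
    ultimately have "card (({v\<in>C. E u v} \<union> N u) \<union> {u}) = card {v\<in>C. E u v} + card (N u) + 1"
      using assms(1) by (simp add: N_def)
    then show ?thesis using row_adj split by (metis of_nat_1 of_nat_add)
  qed
  have "adj_pairs E C + real (card (nonadj_pairs E C)) + real (card C)
          = (\<Sum>u\<in>C. (\<Sum>v\<in>C. adj E u v) + real (card (N u)) + 1)"
    by (simp add: adj_pairs_def card_nonadj sum.distrib)
  also have "\<dots> = real (card C) ^ 2" using row by (simp add: power2_eq_square)
  finally show ?thesis .
qed

text \<open>Greedy clique: adding vertices one at a time, a vertex either extends the
  current clique or has a non-neighbour in it, which contributes two new
  non-adjacent ordered pairs.\<close>
lemma greedy_clique:
  assumes "finite C" and sym: "\<And>u v. E u v \<Longrightarrow> E v u"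
  shows "\<exists>K. is_clique_in E C K \<and> 2 * card C \<le> 2 * card K + card (nonadj_pairs E C)"
  using assms(1)
proof (induction C rule: finite_induct)
  case empty
  then show ?case by (auto simp: is_clique_in_def)
next
  case (insert x F)
  then obtain K where K: "is_clique_in E F K" "2 * card F \<le> 2 * card K + card (nonadj_pairs E F)"
    by blast
  have finK: "finite K" using K(1) insert(1) unfolding is_clique_in_def by (meson finite_subset)
  have fin_nonadj: "finite (nonadj_pairs E (insert x F))"
    unfolding nonadj_pairs_def using insert(1) by auto
  have mono: "nonadj_pairs E F \<subseteq> nonadj_pairs E (insert x F)" unfolding nonadj_pairs_def by auto
  show ?case
  proof (cases "\<forall>y\<in>K. E x y")
    case True
    have "x \<notin> K" using K(1) insert(2) unfolding is_clique_in_def by auto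
    moreover have "is_clique_in E (insert x F) (insert x K)"
      using K(1) True sym unfolding is_clique_in_def by auto
    moreover have "card (nonadj_pairs E F) \<le> card (nonadj_pairs E (insert x F))"
      using card_mono[OF fin_nonadj mono] .
    ultimately show ?thesis using K(2) insert(1,2) finK by (intro exI[of _ "insert x K"]) auto
  next
    case False
    then obtain y where y: "y \<in> K" "\<not> E x y" by auto
    have "y \<in> F" using y K(1) unfolding is_clique_in_def by auto
    have "x \<noteq> y" using \<open>y \<in> F\<close> insert(2) by auto
    have new_pairs: "nonadj_pairs E F \<inter> {(x,y),(y,x)} = {}"
      using insert(2) unfolding nonadj_pairs_def by auto
    have "nonadj_pairs E F \<union> {(x,y),(y,x)} \<subseteq> nonadj_pairs E (insert x F)"
      using mono y \<open>y \<in> F\<close> \<open>x \<noteq> y\<close> sym unfolding nonadj_pairs_def by auto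
    hence "card (nonadj_pairs E F \<union> {(x,y),(y,x)}) \<le> card (nonadj_pairs E (insert x F))"
      using card_mono[OF fin_nonadj] by blast
    moreover have "card (nonadj_pairs E F \<union> {(x,y),(y,x)}) = card (nonadj_pairs E F) + 2"
      using card_Un_disjoint[OF finite_subset[OF mono fin_nonadj] _ new_pairs] \<open>x \<noteq> y\<close> by simp
    moreover have "is_clique_in E (insert x F) K" using K(1) unfolding is_clique_in_def by auto
    ultimately show ?thesis using K(2) insert(1,2) by (intro exI[of _ K]) auto
  qed
qed

lemma clique_le_clique_number:
  assumes "finite W" and "is_clique_in E W K"
  shows "card K \<le> clique_number E W"
proof -
  have "{card K | K. is_clique_in E W K} \<subseteq> card ` Pow W" unfolding is_clique_in_def by auto
  then have "finite {card K | K. is_clique_in E W K}"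
    using assms(1) by (meson finite_Pow_iff finite_imageI finite_subset)
  then show ?thesis unfolding clique_number_def using assms(2) by (intro Max_ge) auto
qed

lemma adj_pairs_clique_bound:
  assumes "finite C" and sym: "\<And>u v. E u v \<Longrightarrow> E v u" and irr: "\<And>u. \<not> E u u"
  shows "adj_pairs E C \<le> real (card C) ^ 2 - 3 * real (card C) + 2 * real (clique_number E C)"
proof -
  obtain K where K: "is_clique_in E C K" "2 * card C \<le> 2 * card K + card (nonadj_pairs E C)"
    using greedy_clique[of C E, OF assms(1) sym] by blast
  have "2 * card C \<le> 2 * clique_number E C + card (nonadj_pairs E C)"
    using K clique_le_clique_number[OF assms(1) K(1)] by linarith
  then have "2 * real (card C) \<le> 2 * real (clique_number E C) + real (card (nonadj_pairs E C))"
    by (metis of_nat_add of_nat_le_iff of_nat_mult of_nat_numeral)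
  then show ?thesis using pair_count[of C E, OF assms(1) irr] by linarith
qed

theorem lemma4:
  fixes V :: "'a set" and E :: "'a \<Rightarrow> 'a \<Rightarrow> bool" and V' :: "'a set"
    and n :: nat and t \<alpha> :: real
  assumes "simple_graph V E"
    and "n = card V" and "n > 4"
    and "regular V E (n - 4)"
    and "V' \<noteq> {}" and "V' \<subseteq> V"
    and "real (card V') = t * real n"
    and "real (clique_number E V') = \<alpha> * real n"
  shows "modularity V E V' \<le> (4 * t ^ 2 + 2 * \<alpha> - 3 * t) / (real n - 4)"
proof -
  have "finite V'" using assms(1,6) unfolding simple_graph_def by (meson finite_subset)
  moreover have "\<And>u v. E u v \<Longrightarrow> E v u" "\<And>u. \<not> E u u"
    using assms(1) unfolding simple_graph_def by auto
  ultimately have bound: "adj_pairs E V' \<le> (t * n) ^ 2 - 3 * (t * n) + 2 * (\<alpha> * n)"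
    using adj_pairs_clique_bound[of V' E] assms(7,8) by simp
  have mod_eq: "modularity V E V' = (adj_pairs E V' - (real n - 4) * (t * n) ^ 2 / n) / (n * (real n - 4))"
    using modularity_regular[OF assms(1) assms(4) assms(6)] assms(2,3,7) by (simp add: of_nat_diff)
  have "(real n - 4) * (t * n) ^ 2 / n = (t * n) ^ 2 - 4 * n * t ^ 2"
    using assms(3) by (simp add: power2_eq_square field_simps)
  then have "adj_pairs E V' - (real n - 4) * (t * n) ^ 2 / n \<le> n * (4 * t ^ 2 + 2 * \<alpha> - 3 * t)"
    using bound by (simp add: algebra_simps power2_eq_square)
  then have "modularity V E V' \<le> n * (4 * t ^ 2 + 2 * \<alpha> - 3 * t) / (n * (real n - 4))"
    unfolding mod_eq using assms(3) by (intro divide_right_mono) auto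
  then show ?thesis using assms(3) by simp
qed
end
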